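(* Let $b$ be a solution of length $L > 11$. Then $b$ is extendable and $b$ is not particular; that is, $b(b(0)) = 1$, $b(i) = 0$ for all $i$ with $b(0) < i < L$, and $b(b(0) - 1) = 0$.
   Context: A solution of length $L \ge 1$ is a sequence $(b(0), \dots, b(L-1))$ of integers with $0 \le b(i) < L$ such that for every $0 \le i < L$, $b(i) = |\{ j : 0 \le j < L,\ b(j) = i\}|$. A solution $b$ of length $L$ is extendable if $b(b(0)) = 1$ and $b(i) = 0$ for all $i$ with $b(0) < i < L$. It is particular if it is extendable and $b(b(0) - 1) > 0$. *)

theory Defs
  imports Main
begin

text \<open>A sequence (b 0, ..., b (L-1)) is represented by a function b :: nat => nat;
only its values on {0..<L} are relevant.\<close>

definition solution :: "nat \<Rightarrow> (nat \<Rightarrow> nat) \<Rightarrow> bool" where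
  "solution L b \<longleftrightarrow> L \<ge> 1 \<and> (\<forall>i<L. b i < L) \<and>
     (\<forall>i<L. b i = card {j. j < L \<and> b j = i})"

definition extendable :: "nat \<Rightarrow> (nat \<Rightarrow> nat) \<Rightarrow> bool" where
  "extendable L b \<longleftrightarrow> solution L b \<and> b (b 0) = 1 \<and> (\<forall>i. b 0 < i \<and> i < L \<longrightarrow> b i = 0)"

definition particular :: "nat \<Rightarrow> (nat \<Rightarrow> nat) \<Rightarrow> bool" where
  "particular L b \<longleftrightarrow> extendable L b \<and> b (b 0 - 1) > 0"

end

theory Submission
  imports Defs
begin

text \<open>Every entry of a solution counts positions, so the entries sum to L, and b 0 \<ge> 1 of
them vanish. The remaining L - b 0 - 1 nonzero entries at positions i \<ge> 1 then sum to
L - b 0, hence are at most 2. So every value of b lies in {0, 1, 2, b 0}, at most four entries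
are nonzero and b 0 \<ge> L - 4. For L > 11 this forces b 0 > 2 and b 0 - 1 \<ge> 3: the only
position with value b 0 is 0, and no position has value b 0 - 1 or any value beyond b 0.\<close>

lemma member_plus_card_le_sum:
  fixes f :: "'a \<Rightarrow> nat"
  assumes "finite S" and "\<And>i. i \<in> S \<Longrightarrow> 0 < f i" and "k \<in> S"
  shows "f k + card S \<le> sum f S + 1"
proof -
  have "card (S - {k}) \<le> sum f (S - {k})"
    using sum_mono[of "S - {k}" "\<lambda>_. 1" f] assms(2) by (simp add: Suc_leI)
  moreover have "sum f S = f k + sum f (S - {k})"
    using sum.remove[OF assms(1,3)] .
  moreover have "card S = card (S - {k}) + 1"
    using card_Suc_Diff1[OF assms(1,3)] by simp
  ultimately show ?thesis by linarith
qed

context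
  fixes L :: nat and b :: "nat \<Rightarrow> nat"
  assumes sol: "solution L b"
begin

lemma solution_length_pos: "0 < L"
  using sol unfolding solution_def by simp

lemma solution_less: "i < L \<Longrightarrow> b i < L"
  using sol unfolding solution_def by blast

lemma solution_card_fibre: "i < L \<Longrightarrow> b i = card {j. j < L \<and> b j = i}"
  using sol unfolding solution_def by blast

lemma solution_fibre_nonempty:
  assumes "i < L" and "b i \<noteq> 0"
  obtains j where "j < L" and "b j = i"
proof -
  have "{j. j < L \<and> b j = i} \<noteq> {}"
    using assms solution_card_fibre[of i] by force
  then show thesis using that by blast
qed

lemma solution_sum: "(\<Sum>i<L. b i) = L"
proof -
  have fibre: "{i \<in> {..<L}. b j = i} = {b j}" if "j < L" for j
    using solution_less[OF that] by auto
  have "(\<Sum>i<L. b i) = (\<Sum>i<L. card {j \<in> {..<L}. b j = i})"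
    by (intro sum.cong) (simp_all add: solution_card_fibre)
  also have "\<dots> = 1 * card {..<L::nat}"
    by (rule sum_multicount) (use fibre in auto)
  finally show ?thesis by simp
qed

lemma solution_head_pos: "0 < b 0"
proof (rule ccontr)
  assume "\<not> 0 < b 0"
  then have "0 \<in> {j. j < L \<and> b j = 0}"
    using solution_length_pos by simp
  then have "0 < card {j. j < L \<and> b j = 0}"
    by (auto simp: card_gt_0_iff)
  with \<open>\<not> 0 < b 0\<close> show False
    using solution_card_fibre solution_length_pos by simp
qed

lemma solution_card_support: "card {i. i < L \<and> b i \<noteq> 0} = L - b 0"
proof -
  have "{..<L} = {j. j < L \<and> b j = 0} \<union> {i. i < L \<and> b i \<noteq> 0}"
    by auto
  then have "L = card ({j. j < L \<and> b j = 0} \<union> {i. i < L \<and> b i \<noteq> 0})"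
    by (metis card_lessThan)
  also have "\<dots> = card {j. j < L \<and> b j = 0} + card {i. i < L \<and> b i \<noteq> 0}"
    by (rule card_Un_disjoint) auto
  finally show ?thesis using solution_card_fibre solution_length_pos by simp
qed

lemma solution_tail_le_2:
  assumes "0 < k" and "k < L"
  shows "b k \<le> 2"
proof (cases "b k = 0")
  case False
  define S where "S = {i. 0 < i \<and> i < L \<and> b i \<noteq> 0}"
  have "0 < L" using assms by simp
  have support: "{i. i < L \<and> b i \<noteq> 0} = insert 0 S" and "0 \<notin> S" "finite S"
    using solution_head_pos \<open>0 < L\<close> unfolding S_def by auto
  have "card S + 1 = L - b 0"
    using solution_card_support support \<open>0 \<notin> S\<close> \<open>finite S\<close> by simp
  moreover have "(\<Sum>i<L. b i) = (\<Sum>i \<in> insert 0 S. b i)"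
    unfolding support[symmetric] by (intro sum.mono_neutral_right) auto
  then have "sum b S + b 0 = L"
    using solution_sum \<open>0 \<notin> S\<close> \<open>finite S\<close> by simp
  moreover have "b k + card S \<le> sum b S + 1"
    using \<open>finite S\<close> False assms by (intro member_plus_card_le_sum) (auto simp: S_def)
  ultimately show ?thesis by linarith
qed simp

lemma solution_support_subset:
  assumes "i < L" and "b i \<noteq> 0"
  shows "i \<in> {0, 1, 2, b 0}"
proof -
  obtain j where "j < L" and "b j = i"
    using solution_fibre_nonempty[OF assms] .
  then show ?thesis
    using solution_tail_le_2[of j] by (cases "j = 0") auto
qed

lemma solution_head_large: "L \<le> b 0 + 4"
proof -
  have "{i. i < L \<and> b i \<noteq> 0} \<subseteq> {0, 1, 2, b 0}"
    using solution_support_subset by blast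
  then have "card {i. i < L \<and> b i \<noteq> 0} \<le> card {0, 1, 2, b 0}"
    by (intro card_mono) auto
  also have "\<dots> \<le> 4" by (simp add: card_insert_if)
  finally show ?thesis using solution_card_support by simp
qed

lemma solution_vanishes:
  assumes "3 \<le> i" and "i < L" and "i \<noteq> b 0"
  shows "b i = 0"
  using assms solution_support_subset[of i] by auto

lemma solution_at_head:
  assumes "2 < b 0"
  shows "b (b 0) = 1"
proof -
  have "b 0 < L"
    using solution_less solution_length_pos .
  have "{j. j < L \<and> b j = b 0} = {0}"
    using assms solution_tail_le_2 \<open>b 0 < L\<close> by fastforce
  then show ?thesis
    using solution_card_fibre[OF \<open>b 0 < L\<close>] by simp
qed

end

theorem mainTheorem7:
  fixes L :: nat and b :: "nat \<Rightarrow> nat"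
  assumes "solution L b" and "L > 11"
  shows "extendable L b \<and> \<not> particular L b"
proof -
  have "8 \<le> b 0"
    using solution_head_large[OF assms(1)] assms(2) by linarith
  then have "extendable L b"
    unfolding extendable_def
    using assms(1) solution_at_head solution_vanishes by auto
  moreover have "b (b 0 - 1) = 0"
    using \<open>8 \<le> b 0\<close> solution_vanishes[OF assms(1), of "b 0 - 1"]
      solution_less[OF assms(1) solution_length_pos[OF assms(1)]] by simp
  ultimately show ?thesis
    unfolding particular_def by simp
qed

end
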